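(* Let $n_1,n_2$ be distinct odd primes with $\gcd(n_1-1,n_2-1)=6$, $n=n_1n_2$, and let $D_0,\dots,D_5$ be the Whiteman generalized cyclotomic classes of order 6 modulo $n$ (see context). Let $q$ be a prime power with $\gcd(q,n)=1$, let $m$ be the order of $q$ modulo $n$, $\alpha$ a primitive element of $\mathrm{GF}(q^m)$ and $\beta=\alpha^{(q^m-1)/n}$. Let $N_1=\{n_1,\dots,(n_2-1)n_1\}$ and $S(x)=\sum_{i\in N_1\cup D_0\cup D_1\cup D_2}x^i$, $T(x)=\sum_{i\in N_1\cup D_1\cup D_2\cup D_3}x^i$, $M(x)=\sum_{i\in N_1\cup D_2\cup D_3\cup D_4}x^i$ in $\mathrm{GF}(q)[x]$. Then: (I) if $q\bmod n\in D_1\cup D_3\cup D_5$, then $S(\beta),T(\beta),M(\beta)\notin\{-1,0\}$; (II) if $q\bmod n\in D_0$, then $S(\beta)^q=S(\beta)$, $T(\beta)^q=T(\beta)$, $M(\beta)^q=M(\beta)$; (III) if $q\bmod n\in D_2\cup D_4$, then $S(\beta)^{q^3}=S(\beta)$, $T(\beta)^{q^3}=T(\beta)$, $M(\beta)^{q^3}=M(\beta)$.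
   Context: Let $e=(n_1-1)(n_2-1)/6$, $g$ a common primitive root of $n_1$ and $n_2$, $u$ an integer with $u\equiv g\pmod{n_1}$, $u\equiv 1\pmod{n_2}$, and $D_i=\{g^su^i\bmod n: s=0,\dots,e-1\}$ for $i=0,\dots,5$; these partition $\mathbb{Z}_n^*$. *)

theory Defs
  imports "HOL-Number_Theory.Number_Theory"
begin

text \<open>Whiteman generalized cyclotomic class D_i of order 6 modulo n = n1*n2,
  with e = (n1-1)(n2-1)/6, common primitive root g, and u with u = g mod n1, u = 1 mod n2.\<close>
definition whiteman_class :: "nat \<Rightarrow> nat \<Rightarrow> nat \<Rightarrow> nat \<Rightarrow> nat \<Rightarrow> nat set" where
  "whiteman_class n1 n2 g u i =
     {(g ^ s * u ^ i) mod (n1 * n2) | s. s < (n1 - 1) * (n2 - 1) div 6}"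

definition primitive_element :: "'a::{field,finite} \<Rightarrow> bool" where
  "primitive_element a \<longleftrightarrow> a \<noteq> 0 \<and> (\<forall>x. x \<noteq> 0 \<longrightarrow> (\<exists>k::nat. x = a ^ k))"

definition prime_power :: "nat \<Rightarrow> bool" where
  "prime_power q \<longleftrightarrow> (\<exists>p k. prime p \<and> k > 0 \<and> q = p ^ k)"

definition set_poly_eval :: "nat set \<Rightarrow> 'a::comm_ring_1 \<Rightarrow> 'a" where
  "set_poly_eval A x = (\<Sum>i\<in>A. x ^ i)"

end

theory Submission
  imports Defs "HOL-Library.Cardinality"
begin

text \<open>Because \<open>\<beta>\<close> is a primitive \<open>n\<close>-th root of unity and \<open>q\<close> is a power of the characteristic,
  raising \<open>\<Sum>i\<in>A. \<beta>^i\<close> to the power \<open>Q = q^k\<close> replaces \<open>A\<close> by \<open>Q A mod n\<close>. If \<open>Q mod n\<close> lies in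
  \<open>D j\<close>, this fixes \<open>N1\<close> and shifts every class \<open>D i\<close> to \<open>D (i + j)\<close>. Cubing sends \<open>D 1, D 3, D 5\<close>
  into \<open>D 3\<close> and \<open>D 2, D 4\<close> into \<open>D 0\<close>, which gives (II) and (III). For (I), \<open>S^(q^3)\<close> is the sum
  over \<open>N1\<close> and the three remaining classes, so \<open>S + S^(q^3)\<close> is twice the sum over \<open>N1\<close> plus the
  sum over all units, i.e. \<open>-2 + 1 = -1\<close>; and \<open>x + x^(q^3) = -1\<close> excludes \<open>x \<in> {-1, 0}\<close>.\<close>

section \<open>Finite fields and roots of unity\<close>

lemma sum_powers_root_of_unity:
  fixes \<gamma> :: "'a::field"
  assumes "\<gamma> ^ r = 1" "\<gamma> \<noteq> 1" "r > 0"
  shows "(\<Sum>k = 1..<r. \<gamma> ^ k) = -1"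
proof -
  have "(1 - \<gamma>) * (\<Sum>k<r. \<gamma> ^ k) = 0"
    using assms(1) by (simp flip: one_diff_power_eq)
  hence "(\<Sum>k<r. \<gamma> ^ k) = 0"
    using assms(2) by simp
  moreover have "(\<Sum>k<r. \<gamma> ^ k) = 1 + (\<Sum>k = 1..<r. \<gamma> ^ k)"
    using assms(3) by (simp add: lessThan_atLeast0 sum.atLeast_Suc_lessThan)
  ultimately show ?thesis
    by (simp add: eq_neg_iff_add_eq_0 add.commute)
qed

lemma power_eq_power_mod:
  fixes \<gamma> :: "'a::monoid_mult"
  assumes "\<gamma> ^ r = 1"
  shows "\<gamma> ^ i = \<gamma> ^ (i mod r)"
proof -
  have "\<gamma> ^ i = (\<gamma> ^ r) ^ (i div r) * \<gamma> ^ (i mod r)"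
    by (simp flip: power_mult power_add)
  thus ?thesis
    using assms by simp
qed

lemma field_power_card_minus_one:
  fixes x :: "'a::{field,finite}"
  assumes "x \<noteq> 0"
  shows "x ^ (CARD('a) - 1) = 1"
proof -
  \<comment> \<open>Multiplication by \<open>x\<close> permutes the nonzero elements.\<close>
  have "(\<Prod>y\<in>UNIV - {0}. x * y) = (\<Prod>y\<in>UNIV - {0}. y)"
    by (rule prod.reindex_bij_witness[of _ "\<lambda>y. y / x" "\<lambda>y. x * y"]) (use assms in auto)
  moreover have "(\<Prod>y\<in>UNIV - {0}. x * y) = x ^ (CARD('a) - 1) * (\<Prod>y\<in>UNIV - {0}. y)"
    by (simp add: prod.distrib card_Diff_singleton)
  moreover have "(\<Prod>y\<in>UNIV - {0::'a}. y) \<noteq> 0"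
    by simp
  ultimately show ?thesis
    by simp
qed

lemma two_le_card_field: "2 \<le> CARD('a::{field,finite})"
  using card_mono[of "UNIV :: 'a set" "{0, 1}"] by simp

lemma primitive_element_power_eq_one_iff:
  fixes \<alpha> :: "'a::{field,finite}"
  assumes "primitive_element \<alpha>"
  shows "\<alpha> ^ k = 1 \<longleftrightarrow> (CARD('a) - 1) dvd k"
proof
  assume "(CARD('a) - 1) dvd k"
  then obtain l where "k = (CARD('a) - 1) * l" ..
  thus "\<alpha> ^ k = 1"
    using assms field_power_card_minus_one[of \<alpha>] by (simp add: power_mult primitive_element_def)
next
  assume k: "\<alpha> ^ k = 1"
  define r where "r = k mod (CARD('a) - 1)"
  have "\<alpha> ^ r = 1"
    using k assms field_power_card_minus_one[of \<alpha>] power_eq_power_mod[of \<alpha> "CARD('a) - 1" k]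
    by (simp add: r_def primitive_element_def)
  have powers: "UNIV - {0} \<subseteq> (\<lambda>i. \<alpha> ^ i) ` {..<r}" if "r > 0"
  proof
    fix x :: 'a
    assume "x \<in> UNIV - {0}"
    then obtain i where "x = \<alpha> ^ i"
      using assms unfolding primitive_element_def by auto
    also have "\<alpha> ^ i = \<alpha> ^ (i mod r)"
      using \<open>\<alpha> ^ r = 1\<close> by (rule power_eq_power_mod)
    finally show "x \<in> (\<lambda>i. \<alpha> ^ i) ` {..<r}"
      using that by auto
  qed
  have "r = 0"
  proof (rule ccontr)
    assume "r \<noteq> 0"
    hence "CARD('a) - 1 \<le> r"
      using card_mono[OF _ powers] card_image_le[of "{..<r}" "\<lambda>i. \<alpha> ^ i"]
      by (simp add: card_Diff_singleton)
    moreover have "r < CARD('a) - 1"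
      unfolding r_def using two_le_card_field[where 'a='a] by simp
    ultimately show False by simp
  qed
  thus "(CARD('a) - 1) dvd k"
    by (simp add: r_def dvd_eq_mod_eq_0)
qed

lemma primitive_element_power_order:
  fixes \<alpha> :: "'a::{field,finite}"
  assumes "primitive_element \<alpha>" "CARD('a) - 1 = n * d"
  shows "(\<alpha> ^ d) ^ k = 1 \<longleftrightarrow> n dvd k"
proof -
  have "n * d > 0"
    using two_le_card_field[where 'a='a] assms(2) by linarith
  have "(\<alpha> ^ d) ^ k = 1 \<longleftrightarrow> n * d dvd d * k"
    unfolding power_mult[symmetric] primitive_element_power_eq_one_iff[OF assms(1)] assms(2) ..
  thus ?thesis
    using \<open>n * d > 0\<close> by (simp add: mult.commute[of n d])
qed

lemma not_minus_one_or_zero_if_add_power_eq_minus_one: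
  fixes x :: "'a::idom"
  assumes "x + x ^ Q = -1" "Q > 0"
  shows "x \<notin> {-1, 0}"
proof
  assume "x \<in> {-1, 0}"
  thus False
  proof
    assume "x = -1"
    hence "(-1 :: 'a) ^ Q = 0"
      using assms(1) by simp
    thus False
      by simp
  next
    assume "x \<in> {0}"
    thus False
      using assms by (simp add: zero_power)
  qed
qed

lemma prime_CHAR_finite_field: "prime CHAR('a::{field,finite})"
  by (intro prime_CHAR_semidom finite_imp_CHAR_pos) simp

lemma prime_power_card_imp_power_of_CHAR:
  assumes "prime_power q" "CARD('a::{field,finite}) = q ^ m" "m > 0"
  shows "\<exists>t. q = CHAR('a) ^ t"
proof -
  obtain p k where pk: "prime p" "k > 0" "q = p ^ k"
    using assms(1) unfolding prime_power_def by auto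
  have "CHAR('a) dvd p ^ (k * m)"
    using CHAR_dvd_CARD[where 'a='a] assms(2) pk(3) by (simp add: power_mult)
  hence "CHAR('a) = p"
    using pk(1) prime_CHAR_finite_field[where 'a='a] by (metis prime_dvd_power primes_dvd_imp_eq)
  thus ?thesis
    using pk(3) by blast
qed

lemma inj_on_mult_mod:
  fixes c n :: nat
  assumes "coprime c n"
  shows "inj_on (\<lambda>i. c * i mod n) {..<n}"
proof (rule inj_onI)
  fix i j
  assume "i \<in> {..<n}" "j \<in> {..<n}" "c * i mod n = c * j mod n"
  thus "i = j"
    using assms cong_mult_lcancel_nat[of c n i j] by (simp add: cong_def)
qed

lemma frobenius_set_poly_eval:
  fixes \<beta> :: "'a::comm_ring_1"
  assumes "prime CHAR('a)" "Q = CHAR('a) ^ t" "\<beta> ^ n = 1" "coprime Q n" "A \<subseteq> {..<n}"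
  shows "set_poly_eval A \<beta> ^ Q = set_poly_eval ((\<lambda>i. Q * i mod n) ` A) \<beta>"
proof -
  have "set_poly_eval A \<beta> ^ Q = (\<Sum>i\<in>A. \<beta> ^ (Q * i mod n))"
    unfolding set_poly_eval_def freshmans_dream_sum'[OF assms(1,2)]
    using power_eq_power_mod[OF assms(3)] by (simp flip: power_mult add: mult.commute)
  also have "\<dots> = set_poly_eval ((\<lambda>i. Q * i mod n) ` A) \<beta>"
    unfolding set_poly_eval_def
    by (subst sum.reindex[OF inj_on_subset[OF inj_on_mult_mod[OF assms(4)] assms(5)]]) simp
  finally show ?thesis .
qed

section \<open>Nonzero multiples and units modulo a product of two primes\<close>

definition nonzero_multiples :: "nat \<Rightarrow> nat \<Rightarrow> nat set" where
  "nonzero_multiples a b = {a * k | k. 1 \<le> k \<and> k \<le> b - 1}"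

lemma nonzero_multiples_eq_image: "nonzero_multiples a b = (\<lambda>k. a * k) ` {1..<b}"
  unfolding nonzero_multiples_def by force

lemma finite_nonzero_multiples [simp]: "finite (nonzero_multiples a b)"
  by (simp add: nonzero_multiples_eq_image)

lemma nonzero_multiples_subset: "a > 0 \<Longrightarrow> nonzero_multiples a b \<subseteq> {1..<a * b}"
  by (auto simp: nonzero_multiples_eq_image)

lemma set_poly_eval_nonzero_multiples:
  fixes \<beta> :: "'a::field"
  assumes "\<beta> ^ (a * b) = 1" "\<beta> ^ a \<noteq> 1" "b > 0"
  shows "set_poly_eval (nonzero_multiples a b) \<beta> = -1"
proof -
  have "a > 0"
    using assms(2) by (intro Nat.gr0I) simp
  hence "inj_on (\<lambda>k. a * k) {1..<b}"
    by (intro inj_onI) simp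
  hence "set_poly_eval (nonzero_multiples a b) \<beta> = (\<Sum>k = 1..<b. (\<beta> ^ a) ^ k)"
    by (simp add: set_poly_eval_def nonzero_multiples_eq_image sum.reindex power_mult)
  also have "\<dots> = -1"
    using assms by (intro sum_powers_root_of_unity) (simp_all flip: power_mult)
  finally show ?thesis .
qed

lemma mult_mod_image_nonzero_residues:
  fixes c b :: nat
  assumes "coprime c b"
  shows "(\<lambda>k. c * k mod b) ` {1..<b} = {1..<b}"
proof (rule endo_inj_surj)
  show "inj_on (\<lambda>k. c * k mod b) {1..<b}"
    by (rule inj_on_subset[OF inj_on_mult_mod[OF assms]]) auto
  show "(\<lambda>k. c * k mod b) ` {1..<b} \<subseteq> {1..<b}"
  proof clarify
    fix k assume k: "k \<in> {1..<b}"
    have "\<not> b dvd k"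
      using k by (auto dest: dvd_imp_le)
    hence "\<not> b dvd c * k"
      using assms by (simp add: coprime_dvd_mult_right_iff coprime_commute)
    thus "c * k mod b \<in> {1..<b}"
      using k by (simp add: dvd_eq_mod_eq_0 Suc_le_eq)
  qed
qed simp

lemma mult_mod_image_nonzero_multiples:
  fixes a b c :: nat
  assumes "coprime c b"
  shows "(\<lambda>i. c * i mod (a * b)) ` nonzero_multiples a b = nonzero_multiples a b"
proof -
  have "(\<lambda>i. c * i mod (a * b)) ` nonzero_multiples a b = (\<lambda>k. a * k) ` (\<lambda>k. c * k mod b) ` {1..<b}"
    unfolding nonzero_multiples_eq_image image_image
    by (intro image_cong refl) (simp add: mult.left_commute[of c a] mod_mult_mult1)
  thus ?thesis
    using mult_mod_image_nonzero_residues[OF assms] by (simp add: nonzero_multiples_eq_image)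
qed

lemma nonzero_multiples_Int_totatives:
  assumes "a > 1"
  shows "nonzero_multiples a b \<inter> totatives (a * b) = {}"
  using assms by (auto simp: nonzero_multiples_eq_image totatives_def)

lemma nonzero_multiples_disjoint:
  assumes "coprime a b"
  shows "nonzero_multiples a b \<inter> nonzero_multiples b a = {}"
proof -
  have False if "a * k = b * l" "1 \<le> k" "k < b" for k l
  proof -
    have "b dvd a * k"
      using that(1) by simp
    hence "b dvd k"
      using assms by (simp add: coprime_dvd_mult_right_iff coprime_commute)
    thus False
      using that(2,3) by (auto dest: dvd_imp_le)
  qed
  thus ?thesis
    by (fastforce simp: nonzero_multiples_eq_image)
qed

lemma prime_product_split:
  assumes "prime p" "prime q"
  shows "{1..<p * q} = totatives (p * q) \<union> nonzero_multiples p q \<union> nonzero_multiples q p"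
proof (intro equalityI subsetI)
  fix x assume x: "x \<in> {1..<p * q}"
  show "x \<in> totatives (p * q) \<union> nonzero_multiples p q \<union> nonzero_multiples q p"
  proof (cases "coprime x (p * q)")
    case True
    thus ?thesis
      using x by (auto simp: totatives_def)
  next
    case False
    hence "p dvd x \<or> q dvd x"
      using assms by (auto dest: prime_imp_coprime simp: coprime_commute)
    thus ?thesis
      using x by (auto simp: nonzero_multiples_eq_image mult.commute[of p q] elim!: dvdE)
  qed
next
  fix x assume x: "x \<in> totatives (p * q) \<union> nonzero_multiples p q \<union> nonzero_multiples q p"
  have "p * q \<notin> totatives (p * q)"
    using assms by (auto simp: totatives_def prime_gt_1_nat)
  hence "totatives (p * q) \<subseteq> {1..<p * q}"
    by (auto simp: totatives_def order.order_iff_strict)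
  with x show "x \<in> {1..<p * q}"
    using nonzero_multiples_subset[of p q] nonzero_multiples_subset[of q p] assms
    by (auto simp: prime_gt_0_nat mult.commute[of q p])
qed

text \<open>This is the Ramanujan sum \<open>c\<^sub>p\<^sub>q(1) = \<mu>(p q) = 1\<close>.\<close>
lemma set_poly_eval_totatives_prime_product:
  fixes \<beta> :: "'a::field"
  assumes "prime p" "prime q" "p \<noteq> q" "\<beta> ^ (p * q) = 1" "\<beta> ^ p \<noteq> 1" "\<beta> ^ q \<noteq> 1"
  shows "set_poly_eval (totatives (p * q)) \<beta> = 1"
proof -
  have p1: "p > 1" and q1: "q > 1"
    using assms(1,2) prime_gt_1_nat by blast+
  have "-1 = set_poly_eval {1..<p * q} \<beta>"
    unfolding set_poly_eval_def using assms(4,5) p1 q1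
    by (intro sum_powers_root_of_unity[symmetric]) auto
  also have "\<dots> = set_poly_eval (totatives (p * q)) \<beta>
      + set_poly_eval (nonzero_multiples p q) \<beta> + set_poly_eval (nonzero_multiples q p) \<beta>"
  proof -
    have "totatives (p * q) \<inter> nonzero_multiples p q = {}"
      "(totatives (p * q) \<union> nonzero_multiples p q) \<inter> nonzero_multiples q p = {}"
      using nonzero_multiples_Int_totatives[OF p1, of q] nonzero_multiples_Int_totatives[OF q1, of p]
        nonzero_multiples_disjoint[OF primes_coprime[OF assms(1-3)]]
      by (auto simp: mult.commute[of q p])
    thus ?thesis
      unfolding prime_product_split[OF assms(1,2)] set_poly_eval_def
      by (simp add: sum.union_disjoint)
  qed
  also have "\<dots> = set_poly_eval (totatives (p * q)) \<beta> - 2"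
    using assms(4-6) p1 q1
    by (simp add: set_poly_eval_nonzero_multiples mult.commute[of q p])
  finally show ?thesis
    by (simp add: algebra_simps)
qed

section \<open>Whiteman's generalized cyclotomic classes of order 6\<close>

lemma cong_power_primroot_iff:
  assumes "prime p" "residue_primroot p g"
  shows "[g ^ a = g ^ b] (mod p) \<longleftrightarrow> [a = b] (mod (p - 1))"
proof -
  have "coprime p g" "ord p g = p - 1"
    using assms by (simp_all add: residue_primroot_def totient_prime coprime_commute)
  thus ?thesis
    using order_divides_expdiff by simp
qed

locale whiteman =
  fixes n1 n2 g u :: nat
  assumes prime_n1: "prime n1" and prime_n2: "prime n2" and distinct_primes: "n1 \<noteq> n2"
    and gcd_eq_6: "gcd (n1 - 1) (n2 - 1) = 6"
    and primroot_n1: "residue_primroot n1 g" and primroot_n2: "residue_primroot n2 g"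
    and u_cong_g: "[u = g] (mod n1)" and u_cong_1: "[u = 1] (mod n2)"
begin

abbreviation n :: nat where "n \<equiv> n1 * n2"
abbreviation e :: nat where "e \<equiv> (n1 - 1) * (n2 - 1) div 6"
abbreviation D :: "nat \<Rightarrow> nat set" where "D \<equiv> whiteman_class n1 n2 g u"

lemma six_dvd: "6 dvd n1 - 1" "6 dvd n2 - 1"
  using gcd_eq_6 by (metis gcd_dvd1, metis gcd_dvd2)

lemma n1_gt_1: "n1 > 1" and n2_gt_1: "n2 > 1"
  using prime_n1 prime_n2 prime_gt_1_nat by blast+

lemma n_gt_1: "n > 1"
  using n1_gt_1 n2_gt_1 by (simp add: one_less_mult)

lemma n_pos: "n > 0"
  using n_gt_1 by linarith

lemma coprime_n1_n2: "coprime n1 n2"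
  using primes_coprime prime_n1 prime_n2 distinct_primes by blast

lemma cong_mod_n_iff: "[a = b] (mod n) \<longleftrightarrow> [a = b] (mod n1) \<and> [a = b] (mod n2)"
  using coprime_n1_n2 by (metis cong_modulus_mult_nat coprime_cong_mult_nat mult.commute)

lemma e_eq_lcm: "e = lcm (n1 - 1) (n2 - 1)"
proof -
  have "(n1 - 1) * (n2 - 1) = 6 * lcm (n1 - 1) (n2 - 1)"
    unfolding gcd_eq_6[symmetric] by (rule prod_gcd_lcm_nat)
  thus ?thesis
    by simp
qed

lemma e_pos: "e > 0"
  unfolding e_eq_lcm using n1_gt_1 n2_gt_1 by (simp add: lcm_pos_nat)

lemma cong_power_g_iff_n1: "[g ^ a = g ^ b] (mod n1) \<longleftrightarrow> [a = b] (mod (n1 - 1))"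
  using cong_power_primroot_iff[OF prime_n1 primroot_n1] .

lemma cong_power_g_iff_n2: "[g ^ a = g ^ b] (mod n2) \<longleftrightarrow> [a = b] (mod (n2 - 1))"
  using cong_power_primroot_iff[OF prime_n2 primroot_n2] .

lemma cong_power_g_iff: "[g ^ a = g ^ b] (mod n) \<longleftrightarrow> [a = b] (mod e)"
proof -
  have "[a = b] (mod e) \<longleftrightarrow> [a = b] (mod (n1 - 1)) \<and> [a = b] (mod (n2 - 1))"
    unfolding e_eq_lcm
    by (meson cong_cong_lcm_nat cong_dvd_modulus_nat dvd_lcm1 dvd_lcm2)
  thus ?thesis
    unfolding cong_mod_n_iff cong_power_g_iff_n1 cong_power_g_iff_n2 by simp
qed

lemma coprime_g_n: "coprime g n" and coprime_u_n: "coprime u n"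
proof -
  have "coprime g n1" "coprime g n2"
    using primroot_n1 primroot_n2 by (simp_all add: residue_primroot_def coprime_commute)
  moreover have "coprime u n1"
    using cong_imp_coprime[OF cong_sym[OF u_cong_g]] \<open>coprime g n1\<close> by blast
  moreover have "coprime u n2"
    using cong_imp_coprime[OF cong_sym[OF u_cong_1]] by simp
  ultimately show "coprime g n" "coprime u n"
    by simp_all
qed

text \<open>Choose \<open>w \<equiv> 6 (mod n1 - 1)\<close> and \<open>w \<equiv> 0 (mod n2 - 1)\<close>; this is solvable because the two
  moduli have gcd 6.\<close>
lemma u_power_6: "\<exists>w. [u ^ 6 = g ^ w] (mod n)"
proof -
  obtain a b where a: "n1 - 1 = 6 * a" and b: "n2 - 1 = 6 * b"
    using six_dvd by (auto elim!: dvdE)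
  have "6 * gcd b a = 6 * 1"
    using gcd_eq_6 unfolding a b gcd_mult_distrib_nat by (simp add: gcd.commute)
  hence "coprime b a"
    by (simp only: mult_cancel_left coprime_iff_gcd_eq_1) simp
  then obtain k where k: "[b * k = 1] (mod a)"
    using cong_solve_coprime_nat by (metis One_nat_def)
  define w where "w = (n2 - 1) * k"
  have "[6 * (b * k) = 6 * 1] (mod (6 * a))"
    using k by (rule cong_cmult_leftI)
  hence "[w = 6] (mod (n1 - 1))"
    unfolding w_def a b by (simp add: mult.assoc)
  hence "[g ^ w = g ^ 6] (mod n1)"
    by (simp add: cong_power_g_iff_n1)
  hence "[u ^ 6 = g ^ w] (mod n1)"
    using cong_trans[OF cong_pow[OF u_cong_g] cong_sym] by blast
  moreover have "[g ^ w = g ^ 0] (mod n2)"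
    unfolding cong_power_g_iff_n2 by (simp add: w_def cong_0_iff)
  hence "[u ^ 6 = g ^ w] (mod n2)"
    using cong_trans[OF cong_pow[OF u_cong_1, of 6] cong_sym] by simp
  ultimately show ?thesis
    using cong_mod_n_iff by blast
qed

lemma mem_whiteman_class: "x \<in> D i \<longleftrightarrow> (\<exists>s<e. x = g ^ s * u ^ i mod n)"
  by (auto simp: whiteman_class_def)

lemma power_mod_mem_whiteman_class: "g ^ s * u ^ i mod n \<in> D (i mod 6)"
proof -
  obtain w where w: "[u ^ 6 = g ^ w] (mod n)"
    using u_power_6 by blast
  define s' where "s' = (s + w * (i div 6)) mod e"
  have "u ^ i = (u ^ 6) ^ (i div 6) * u ^ (i mod 6)"
    by (simp flip: power_mult power_add)
  hence "[g ^ s * u ^ i = g ^ s * ((g ^ w) ^ (i div 6) * u ^ (i mod 6))] (mod n)"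
    using w by (simp only:) (intro cong_mult cong_refl cong_pow)
  also have "g ^ s * ((g ^ w) ^ (i div 6) * u ^ (i mod 6)) = g ^ (s + w * (i div 6)) * u ^ (i mod 6)"
    by (simp add: power_add power_mult)
  also have "[g ^ (s + w * (i div 6)) * u ^ (i mod 6) = g ^ s' * u ^ (i mod 6)] (mod n)"
    unfolding s'_def by (intro cong_scalar_right cong_power_g_iff[THEN iffD2]) (simp add: cong_def)
  finally have "g ^ s * u ^ i mod n = g ^ s' * u ^ (i mod 6) mod n"
    by (simp add: cong_def)
  moreover have "s' < e"
    using e_pos by (simp add: s'_def)
  ultimately show ?thesis
    unfolding mem_whiteman_class by blast
qed

lemma whiteman_class_mult:
  assumes "x \<in> D i" "y \<in> D j"
  shows "x * y mod n \<in> D ((i + j) mod 6)"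
proof -
  obtain s t where "x = g ^ s * u ^ i mod n" "y = g ^ t * u ^ j mod n"
    using assms unfolding mem_whiteman_class by blast
  hence "x * y mod n = g ^ (s + t) * u ^ (i + j) mod n"
    by (simp add: mod_mult_eq power_add mult_ac)
  thus ?thesis
    using power_mod_mem_whiteman_class by simp
qed

lemma power_mem_whiteman_class:
  assumes "c mod n \<in> D i"
  shows "c ^ k mod n \<in> D (k * i mod 6)"
proof -
  obtain s where "c mod n = g ^ s * u ^ i mod n"
    using assms unfolding mem_whiteman_class by blast
  have "c ^ k mod n = (c mod n) ^ k mod n"
    by (simp add: power_mod)
  also have "\<dots> = (g ^ s * u ^ i) ^ k mod n"
    by (simp add: \<open>c mod n = g ^ s * u ^ i mod n\<close> power_mod)
  also have "\<dots> = g ^ (s * k) * u ^ (i * k) mod n"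
    by (simp add: power_mult_distrib power_mult)
  finally show ?thesis
    using power_mod_mem_whiteman_class by (simp add: mult.commute[of k i])
qed

lemma whiteman_class_eq_image: "D i = (\<lambda>s. g ^ s * u ^ i mod n) ` {..<e}"
  by (auto simp: mem_whiteman_class)

lemma finite_whiteman_class [simp]: "finite (D i)"
  by (simp add: whiteman_class_eq_image)

lemma card_whiteman_class: "card (D i) = e"
proof -
  have "inj_on (\<lambda>s. g ^ s * u ^ i mod n) {..<e}"
  proof (rule inj_onI)
    fix s t
    assume st: "s \<in> {..<e}" "t \<in> {..<e}" and "g ^ s * u ^ i mod n = g ^ t * u ^ i mod n"
    hence "[g ^ s * u ^ i = g ^ t * u ^ i] (mod n)"
      by (simp add: cong_def)
    hence "[g ^ s = g ^ t] (mod n)"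
      using coprime_u_n by (simp add: cong_mult_rcancel_nat)
    hence "[s = t] (mod e)"
      unfolding cong_power_g_iff .
    thus "s = t"
      using st by (simp add: cong_def)
  qed
  thus ?thesis
    by (simp add: whiteman_class_eq_image card_image)
qed

lemma whiteman_class_subset_totatives: "D i \<subseteq> totatives n"
proof
  fix x assume "x \<in> D i"
  then obtain s where x: "x = g ^ s * u ^ i mod n"
    unfolding mem_whiteman_class by blast
  have "coprime (g ^ s * u ^ i) n"
    using coprime_g_n coprime_u_n by simp
  moreover have "n \<noteq> 0"
    using n1_gt_1 n2_gt_1 by simp
  ultimately have "coprime x n"
    unfolding x by (metis coprime_mod_left_iff)
  moreover have "x < n"
    unfolding x using n_gt_1 by (intro mod_less_divisor) linarith
  moreover have "x \<noteq> 0"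
    using calculation n_gt_1 by (intro notI) simp
  ultimately show "x \<in> totatives n"
    by (simp add: totatives_def)
qed

lemma whiteman_class_disjoint:
  assumes "i < 6" "j < 6" "i \<noteq> j"
  shows "D i \<inter> D j = {}"
proof (rule ccontr)
  assume "D i \<inter> D j \<noteq> {}"
  then obtain x where "x \<in> D i" "x \<in> D j"
    by blast
  then obtain s t where "g ^ s * u ^ i mod n = g ^ t * u ^ j mod n"
    unfolding mem_whiteman_class by metis
  hence "[g ^ s * u ^ i = g ^ t * u ^ j] (mod n1)" "[g ^ s * u ^ i = g ^ t * u ^ j] (mod n2)"
    using cong_mod_n_iff by (simp_all add: cong_def)
  \<comment> \<open>Modulo \<open>n1\<close> the exponents of \<open>g\<close> are \<open>s + i\<close> and \<open>t + j\<close>, modulo \<open>n2\<close> they are \<open>s\<close> and \<open>t\<close>.\<close>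
  moreover have "[g ^ s * u ^ i = g ^ (s + i)] (mod n1)" "[g ^ t * u ^ j = g ^ (t + j)] (mod n1)"
    using u_cong_g by (simp_all add: power_add cong_mult cong_pow)
  moreover have "[g ^ s * u ^ i = g ^ s] (mod n2)" "[g ^ t * u ^ j = g ^ t] (mod n2)"
    using cong_mult[OF cong_refl cong_pow[OF u_cong_1]] by (simp_all add: mult.commute)
  ultimately have "[g ^ (s + i) = g ^ (t + j)] (mod n1)" "[g ^ s = g ^ t] (mod n2)"
    by (meson cong_sym cong_trans)+
  hence "[s + i = t + j] (mod 6)" "[s = t] (mod 6)"
    unfolding cong_power_g_iff_n1 cong_power_g_iff_n2
    using cong_dvd_modulus_nat six_dvd by blast+
  hence "[i = j] (mod 6)"
    by (metis cong_add_lcancel_nat cong_add_rcancel_nat cong_sym cong_trans)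
  thus False
    using assms by (simp add: cong_def)
qed

lemma totatives_eq_Union_whiteman_class: "totatives n = (\<Union>i<6. D i)"
proof -
  have "card (\<Union>i<6. D i) = (\<Sum>i<6. card (D i))"
    by (intro card_UN_disjoint) (auto simp: whiteman_class_disjoint)
  also have "\<dots> = (n1 - 1) * (n2 - 1)"
    using six_dvd by (auto simp: card_whiteman_class)
  also have "\<dots> = card (totatives n)"
    using totient_mult_coprime[OF coprime_n1_n2] totient_prime[OF prime_n1] totient_prime[OF prime_n2]
    by (simp add: totient_def)
  finally show ?thesis
    using whiteman_class_subset_totatives
    by (intro card_subset_eq[symmetric]) auto
qed

lemma whiteman_class_subset_lessThan: "D i \<subseteq> {..<n}"
  using n_pos by (auto simp: mem_whiteman_class)

lemma coprime_if_mod_mem_whiteman_class: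
  assumes "c mod n \<in> D j"
  shows "coprime c n"
proof -
  have "coprime (c mod n) n"
    using assms whiteman_class_subset_totatives unfolding totatives_def by blast
  thus ?thesis
    using n_pos by (metis coprime_mod_left_iff not_gr0)
qed

lemma mult_mod_image_whiteman_class:
  assumes "c mod n \<in> D j"
  shows "(\<lambda>i. c * i mod n) ` D k = D ((j + k) mod 6)"
proof (rule card_subset_eq)
  show "(\<lambda>i. c * i mod n) ` D k \<subseteq> D ((j + k) mod 6)"
    using whiteman_class_mult[OF assms] by (auto simp: mod_mult_left_eq)
  have "inj_on (\<lambda>i. c * i mod n) (D k)"
    using inj_on_mult_mod[OF coprime_if_mod_mem_whiteman_class[OF assms]] whiteman_class_subset_lessThan
    by (rule inj_on_subset)
  thus "card ((\<lambda>i. c * i mod n) ` D k) = card (D ((j + k) mod 6))"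
    by (simp add: card_image card_whiteman_class)
qed simp

abbreviation N1 :: "nat set" where "N1 \<equiv> nonzero_multiples n1 n2"

text \<open>The supports of \<open>S\<close>, \<open>T\<close>, \<open>M\<close> are \<open>support {0, 1, 2}\<close>, \<open>support {1, 2, 3}\<close>, \<open>support {2, 3, 4}\<close>.\<close>
definition support :: "nat set \<Rightarrow> nat set" where
  "support I = N1 \<union> (\<Union>i\<in>I. D i)"

lemma support_subset_lessThan: "support I \<subseteq> {..<n}"
  using nonzero_multiples_subset[of n1 n2] n1_gt_1 whiteman_class_subset_lessThan
  by (auto simp: support_def)

lemma mult_mod_image_support:
  assumes "c mod n \<in> D j"
  shows "(\<lambda>i. c * i mod n) ` support I = support ((\<lambda>i. (j + i) mod 6) ` I)"
proof -
  have "coprime c n2"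
    using coprime_if_mod_mem_whiteman_class[OF assms] by simp
  thus ?thesis
    by (simp add: support_def image_Un image_UN mult_mod_image_nonzero_multiples
        mult_mod_image_whiteman_class[OF assms])
qed

lemma sum_set_poly_eval_whiteman_class:
  "(\<Sum>i<6. set_poly_eval (D i) \<beta>) = set_poly_eval (totatives n) \<beta>"
  unfolding totatives_eq_Union_whiteman_class set_poly_eval_def
  by (rule sum.UNION_disjoint[symmetric]) (auto simp: whiteman_class_disjoint)

end

section \<open>Frobenius action on the supports\<close>

locale whiteman_root_of_unity = whiteman +
  fixes \<beta> :: "'a::field"
  assumes prime_CHAR: "prime CHAR('a)"
    and power_eq_one_iff: "\<beta> ^ k = 1 \<longleftrightarrow> n1 * n2 dvd k"
begin

lemma set_poly_eval_N1: "set_poly_eval N1 \<beta> = -1"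
  using power_eq_one_iff[of n] power_eq_one_iff[of n1] n1_gt_1 n2_gt_1
  by (intro set_poly_eval_nonzero_multiples) (auto dest: dvd_imp_le)

lemma sum_set_poly_eval_whiteman_class_eq_one: "(\<Sum>i<6. set_poly_eval (D i) \<beta>) = 1"
  unfolding sum_set_poly_eval_whiteman_class
  using power_eq_one_iff[of n] power_eq_one_iff[of n1] power_eq_one_iff[of n2] n1_gt_1 n2_gt_1
  by (intro set_poly_eval_totatives_prime_product prime_n1 prime_n2 distinct_primes)
    (auto dest: dvd_imp_le)

lemma set_poly_eval_support:
  assumes "I \<subseteq> {..<6}"
  shows "set_poly_eval (support I) \<beta> = -1 + (\<Sum>i\<in>I. set_poly_eval (D i) \<beta>)"
proof -
  have "finite I"
    using assms finite_subset by blast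
  have "N1 \<inter> (\<Union>i\<in>I. D i) = {}"
    using nonzero_multiples_Int_totatives[OF n1_gt_1, of n2] whiteman_class_subset_totatives by blast
  hence "set_poly_eval (support I) \<beta> = set_poly_eval N1 \<beta> + set_poly_eval (\<Union>i\<in>I. D i) \<beta>"
    using \<open>finite I\<close> by (simp add: support_def set_poly_eval_def sum.union_disjoint)
  also have "set_poly_eval (\<Union>i\<in>I. D i) \<beta> = (\<Sum>i\<in>I. set_poly_eval (D i) \<beta>)"
    unfolding set_poly_eval_def using \<open>finite I\<close> assms
    by (intro sum.UNION_disjoint) (auto simp: whiteman_class_disjoint subset_iff)
  finally show ?thesis
    by (simp add: set_poly_eval_N1)
qed

lemma set_poly_eval_support_add_complement:
  assumes "I \<subseteq> {..<6}"
  shows "set_poly_eval (support I) \<beta> + set_poly_eval (support ({..<6} - I)) \<beta> = -1"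
proof -
  have "(\<Sum>i\<in>I. set_poly_eval (D i) \<beta>) + (\<Sum>i\<in>{..<6} - I. set_poly_eval (D i) \<beta>) = 1"
    using sum.subset_diff[OF assms, of "\<lambda>i. set_poly_eval (D i) \<beta>"]
      sum_set_poly_eval_whiteman_class_eq_one by (simp add: add.commute)
  thus ?thesis
    using assms by (simp add: set_poly_eval_support)
qed

lemma set_poly_eval_support_power:
  assumes "Q = CHAR('a) ^ t" "Q mod n \<in> D j"
  shows "set_poly_eval (support I) \<beta> ^ Q = set_poly_eval (support ((\<lambda>i. (j + i) mod 6) ` I)) \<beta>"
  using frobenius_set_poly_eval[OF prime_CHAR assms(1) _ coprime_if_mod_mem_whiteman_class[OF assms(2)]
      support_subset_lessThan] mult_mod_image_support[OF assms(2)] power_eq_one_iff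
  by simp

lemma set_poly_eval_support_power_fixed:
  assumes "Q = CHAR('a) ^ t" "Q mod n \<in> D 0" "I \<subseteq> {..<6}"
  shows "set_poly_eval (support I) \<beta> ^ Q = set_poly_eval (support I) \<beta>"
proof -
  have "(\<lambda>i. (0 + i) mod 6) ` I = I"
    using assms(3) by (auto simp: subset_iff image_iff)
  thus ?thesis
    using set_poly_eval_support_power[OF assms(1,2)] by metis
qed

lemma set_poly_eval_support_not_minus_one_or_zero:
  assumes "Q = CHAR('a) ^ t" "Q mod n \<in> D 3" "I \<subseteq> {..<6}"
    and "(\<lambda>i. (3 + i) mod 6) ` I = {..<6} - I"
  shows "set_poly_eval (support I) \<beta> \<notin> {-1, 0}"
proof (rule not_minus_one_or_zero_if_add_power_eq_minus_one)
  show "set_poly_eval (support I) \<beta> + set_poly_eval (support I) \<beta> ^ Q = -1"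
    using set_poly_eval_support_power[OF assms(1,2)] set_poly_eval_support_add_complement[OF assms(3)]
    by (simp add: assms(4))
  show "Q > 0"
    using prime_CHAR assms(1) by (simp add: prime_gt_0_nat)
qed

lemma set_poly_eval_support_frobenius:
  assumes "q = CHAR('a) ^ t" "I \<in> {{0, 1, 2}, {1, 2, 3}, {2, 3, 4}}"
  shows "(q mod n \<in> D 1 \<union> D 3 \<union> D 5 \<longrightarrow> set_poly_eval (support I) \<beta> \<notin> {-1, 0})
    \<and> (q mod n \<in> D 0 \<longrightarrow> set_poly_eval (support I) \<beta> ^ q = set_poly_eval (support I) \<beta>)
    \<and> (q mod n \<in> D 2 \<union> D 4 \<longrightarrow> set_poly_eval (support I) \<beta> ^ (q ^ 3) = set_poly_eval (support I) \<beta>)"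
proof (intro conjI impI)
  have q3: "q ^ 3 = CHAR('a) ^ (t * 3)"
    by (simp add: assms(1) power_mult)
  have I: "I \<subseteq> {..<6}"
    using assms(2) by auto
  have cube: "q ^ 3 mod n \<in> D (3 * i mod 6)" if "q mod n \<in> D i" for i
    using power_mem_whiteman_class[OF that] .
  show "set_poly_eval (support I) \<beta> \<notin> {-1, 0}" if "q mod n \<in> D 1 \<union> D 3 \<union> D 5"
  proof (rule set_poly_eval_support_not_minus_one_or_zero[OF q3 _ I])
    show "q ^ 3 mod n \<in> D 3"
      using that cube[of 1] cube[of 3] cube[of 5] by auto
    show "(\<lambda>i. (3 + i) mod 6) ` I = {..<6} - I"
      using assms(2) by auto
  qed
  show "set_poly_eval (support I) \<beta> ^ q = set_poly_eval (support I) \<beta>" if "q mod n \<in> D 0"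
    using set_poly_eval_support_power_fixed[OF assms(1) that I] .
  show "set_poly_eval (support I) \<beta> ^ (q ^ 3) = set_poly_eval (support I) \<beta>" if "q mod n \<in> D 2 \<union> D 4"
    using set_poly_eval_support_power_fixed[OF q3 _ I] that cube[of 2] cube[of 4] by auto
qed

end

lemma whiteman_root_of_unity_power_primitive_element:
  fixes \<alpha> :: "'a::{field,finite}"
  assumes "whiteman n1 n2 g u" "primitive_element \<alpha>" "CARD('a) - 1 = n1 * n2 * d"
  shows "whiteman_root_of_unity n1 n2 g u (\<alpha> ^ d)"
  using assms primitive_element_power_order[OF assms(2,3)] prime_CHAR_finite_field
  by (intro whiteman_root_of_unity.intro whiteman_root_of_unity_axioms.intro) auto

theorem lemma5:
  fixes n1 n2 g u q m :: nat and \<alpha> :: "'a::{field,finite}"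
  defines "n \<equiv> n1 * n2"
  defines "D \<equiv> whiteman_class n1 n2 g u"
  defines "N1 \<equiv> {n1 * k | k. 1 \<le> k \<and> k \<le> n2 - 1}"
  defines "\<beta> \<equiv> \<alpha> ^ ((q ^ m - 1) div n)"
  defines "S \<equiv> set_poly_eval (N1 \<union> D 0 \<union> D 1 \<union> D 2) \<beta>"
  defines "T \<equiv> set_poly_eval (N1 \<union> D 1 \<union> D 2 \<union> D 3) \<beta>"
  defines "M \<equiv> set_poly_eval (N1 \<union> D 2 \<union> D 3 \<union> D 4) \<beta>"
  assumes "prime n1" and "prime n2" and "odd n1" and "odd n2" and "n1 \<noteq> n2"
    and "gcd (n1 - 1) (n2 - 1) = 6"
    and "residue_primroot n1 g" and "residue_primroot n2 g"
    and "[u = g] (mod n1)" and "[u = 1] (mod n2)"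
    and "prime_power q" and "coprime q n"
    and "m = ord n q"
    and "card (UNIV :: 'a set) = q ^ m"
    and "primitive_element \<alpha>"
  shows "(q mod n \<in> D 1 \<union> D 3 \<union> D 5 \<longrightarrow>
            S \<notin> {-1, 0} \<and> T \<notin> {-1, 0} \<and> M \<notin> {-1, 0})
       \<and> (q mod n \<in> D 0 \<longrightarrow> S ^ q = S \<and> T ^ q = T \<and> M ^ q = M)
       \<and> (q mod n \<in> D 2 \<union> D 4 \<longrightarrow>
            S ^ (q ^ 3) = S \<and> T ^ (q ^ 3) = T \<and> M ^ (q ^ 3) = M)"
proof -
  have "n > 0"
    using assms prime_gt_0_nat by (simp add: n_def)
  have "m > 0"
    using two_le_card_field[where 'a='a] assms by (intro Nat.gr0I) simp
  obtain d where d: "q ^ m - 1 = n * d"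
    using cong_to_1_nat[OF conjunct1[OF ord_works]] assms by (auto elim!: dvdE)
  have "\<beta> = \<alpha> ^ d"
    unfolding \<beta>_def d using \<open>n > 0\<close> by simp
  moreover have "whiteman n1 n2 g u"
    by unfold_locales (use assms in auto)
  moreover have "CARD('a) - 1 = n1 * n2 * d"
    using assms d by (simp add: n_def)
  ultimately interpret R: whiteman_root_of_unity n1 n2 g u \<beta>
    using whiteman_root_of_unity_power_primitive_element[of n1 n2 g u \<alpha> d] \<open>primitive_element \<alpha>\<close>
    by simp
  obtain t where t: "q = CHAR('a) ^ t"
    using prime_power_card_imp_power_of_CHAR assms \<open>m > 0\<close> by blast
  have "S = set_poly_eval (R.support {0, 1, 2}) \<beta>" "T = set_poly_eval (R.support {1, 2, 3}) \<beta>"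
    "M = set_poly_eval (R.support {2, 3, 4}) \<beta>"
    unfolding S_def T_def M_def D_def N1_def R.support_def nonzero_multiples_def
    by (auto intro!: arg_cong2[where f = set_poly_eval])
  thus ?thesis
    using R.set_poly_eval_support_frobenius[OF t, of "{0, 1, 2}"]
      R.set_poly_eval_support_frobenius[OF t, of "{1, 2, 3}"]
      R.set_poly_eval_support_frobenius[OF t, of "{2, 3, 4}"]
    by (simp add: D_def n_def)
qed

end
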